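(* For any graph $G$ with $m\ge1$ edges and any integer $1\le k\le n$, $Q_k^+\ge\left(1-\frac1k\right)Q_{\mathrm{opt}}$.
   Context: $G=(V,E)$ is an undirected simple graph, $V=\{1,\dots,n\}$, $m=|E|\ge1$, adjacency matrix $A$, degrees $d_i$. For a partition $\mathcal{C}$ of $V$ into nonempty communities, its modularity is $Q(\mathcal{C})=\frac{1}{2m}\sum_{i,j}\left(A_{i,j}-\frac{d_id_j}{2m}\right)\delta_{i,j}$, the sum over all ordered pairs $(i,j)$ including $i=j$, where $\delta_{i,j}=1$ if $i,j$ lie in the same community and $0$ otherwise. $Q_k$ denotes the maximum modularity over partitions of $V$ into exactly $k$ nonempty communities, $Q_k^+=\max_{1\le i\le k}Q_i$, and $Q_{\mathrm{opt}}=Q_n^+$ is the maximum modularity over all partitions. *)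

theory Defs
  imports Complex_Main "HOL-Library.Disjoint_Sets"
begin

definition simple_graph :: "nat \<Rightarrow> (nat \<Rightarrow> nat \<Rightarrow> bool) \<Rightarrow> bool" where
  "simple_graph n E \<longleftrightarrow>
     (\<forall>i j. E i j \<longrightarrow> i \<in> {1..n} \<and> j \<in> {1..n}) \<and>
     (\<forall>i j. E i j \<longrightarrow> E j i) \<and> (\<forall>i. \<not> E i i)"

definition adj :: "(nat \<Rightarrow> nat \<Rightarrow> bool) \<Rightarrow> nat \<Rightarrow> nat \<Rightarrow> real" where
  "adj E i j = (if E i j then 1 else 0)"

definition degree :: "nat \<Rightarrow> (nat \<Rightarrow> nat \<Rightarrow> bool) \<Rightarrow> nat \<Rightarrow> real" where
  "degree n E i = (\<Sum>j\<in>{1..n}. adj E i j)"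

definition num_edges :: "nat \<Rightarrow> (nat \<Rightarrow> nat \<Rightarrow> bool) \<Rightarrow> nat" where
  "num_edges n E = card {{i, j} | i j. i \<in> {1..n} \<and> j \<in> {1..n} \<and> E i j}"

definition same_comm :: "nat set set \<Rightarrow> nat \<Rightarrow> nat \<Rightarrow> bool" where
  "same_comm P i j \<longleftrightarrow> (\<exists>C\<in>P. i \<in> C \<and> j \<in> C)"

definition modularity :: "nat \<Rightarrow> (nat \<Rightarrow> nat \<Rightarrow> bool) \<Rightarrow> nat set set \<Rightarrow> real" where
  "modularity n E P =
     (let m = real (num_edges n E) in
      (1 / (2 * m)) * (\<Sum>i\<in>{1..n}. \<Sum>j\<in>{1..n}.
         (adj E i j - degree n E i * degree n E j / (2 * m)) *
         (if same_comm P i j then 1 else 0)))"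

definition Qk :: "nat \<Rightarrow> (nat \<Rightarrow> nat \<Rightarrow> bool) \<Rightarrow> nat \<Rightarrow> real" where
  "Qk n E k = Max (modularity n E ` {P. partition_on {1..n} P \<and> card P = k})"

definition Qk_plus :: "nat \<Rightarrow> (nat \<Rightarrow> nat \<Rightarrow> bool) \<Rightarrow> nat \<Rightarrow> real" where
  "Qk_plus n E k = Max ((\<lambda>i. Qk n E i) ` {1..k})"

definition Q_opt :: "nat \<Rightarrow> (nat \<Rightarrow> nat \<Rightarrow> bool) \<Rightarrow> real" where
  "Q_opt n E = Qk_plus n E n"

end

theory Submission
  imports Defs "HOL-Library.FuncSet"
begin

(* Fix an optimal partition P of {1..n} and
   describe it by a labelling h of the vertices: i and j share a community iff h i = h j.
   Colour the p labels with k colours in all k^p possible ways and merge communities of equal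
   colour.  Two vertices of one community always stay together, while two vertices of
   different communities are merged by exactly k^(p-1) colourings.  Since the entries of the
   modularity matrix B_ij = A_ij - d_i d_j / 2m sum to zero (handshake lemma), the average
   modularity of the merged partitions is (1 - 1/k) Q(P), so some colouring reaches at least
   this value.  The merged partition has between 1 and k communities, hence
   Q_k^+ >= (1 - 1/k) Q_opt. *)

definition modularity_matrix :: "nat \<Rightarrow> (nat \<Rightarrow> nat \<Rightarrow> bool) \<Rightarrow> nat \<Rightarrow> nat \<Rightarrow> real" where
  "modularity_matrix n E i j =
     adj E i j - degree n E i * degree n E j / (2 * real (num_edges n E))"

text \<open>Modularity of the communities given by the level sets of a labelling h of the vertices.
  Labellings of arbitrary type are allowed, so that labels can later be recoloured.\<close>
definition label_modularity :: "nat \<Rightarrow> (nat \<Rightarrow> nat \<Rightarrow> bool) \<Rightarrow> (nat \<Rightarrow> 'a) \<Rightarrow> real" where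
  "label_modularity n E h = (1 / (2 * real (num_edges n E))) *
     (\<Sum>i\<in>{1..n}. \<Sum>j\<in>{1..n}. modularity_matrix n E i j * (if h i = h j then 1 else 0))"

lemma modularity_eq_label_modularity:
  assumes "\<And>i j. i \<in> {1..n} \<Longrightarrow> j \<in> {1..n} \<Longrightarrow> same_comm P i j \<longleftrightarrow> h i = h j"
  shows "modularity n E P = label_modularity n E h"
  unfolding modularity_def label_modularity_def modularity_matrix_def Let_def
  by (intro arg_cong[where f="(*) _"] sum.cong refl) (simp add: assms)

definition level_partition :: "nat \<Rightarrow> (nat \<Rightarrow> 'a) \<Rightarrow> nat set set" where
  "level_partition n h = (\<lambda>t. {i\<in>{1..n}. h i = t}) ` (h ` {1..n})"

lemma level_partition_partition_on: "partition_on {1..n} (level_partition n h)"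
  unfolding partition_on_def level_partition_def disjoint_def by auto

lemma card_level_partition: "card (level_partition n h) = card (h ` {1..n})"
  unfolding level_partition_def
proof (rule card_image, rule inj_onI)
  fix x y assume "x \<in> h ` {1..n}" and levels: "{i \<in> {1..n}. h i = x} = {i \<in> {1..n}. h i = y}"
  then obtain i where "i \<in> {1..n}" "h i = x" by blast
  with levels show "x = y" by blast
qed

lemma same_comm_level_partition:
  "i \<in> {1..n} \<Longrightarrow> j \<in> {1..n} \<Longrightarrow> same_comm (level_partition n h) i j \<longleftrightarrow> h i = h j"
  unfolding same_comm_def level_partition_def by auto

definition block_of :: "nat set set \<Rightarrow> nat \<Rightarrow> nat set" where
  "block_of P i = {j. same_comm P i j}"

lemma same_comm_iff_block_eq:
  assumes "partition_on A P" "i \<in> A" "j \<in> A"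
  shows "same_comm P i j \<longleftrightarrow> block_of P i = block_of P j"
proof -
  (* The blocks are the classes of the library's equivalence relation of a partition. *)
  let ?R = "{(x, y). \<exists>p\<in>P. x \<in> p \<and> y \<in> p}"
  have "\<And>x. ?R `` {x} = block_of P x"
    by (auto simp: block_of_def same_comm_def)
  then show ?thesis
    using equiv_class_eq_iff[OF equiv_partition_on[OF assms(1)], of i j] assms(2,3)
    by (simp add: same_comm_def)
qed

text \<open>Handshake lemma: the adjacency matrix counts every edge twice, once per orientation.\<close>
lemma adjacency_sum:
  assumes "simple_graph n E"
  shows "(\<Sum>i\<in>{1..n}. \<Sum>j\<in>{1..n}. adj E i j) = 2 * real (num_edges n E)"
proof -
  let ?V = "{1..n} \<times> {1..n}"
  let ?D = "{(i, j) \<in> ?V. E i j}"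
  let ?T = "{{i, j} | i j. i \<in> {1..n} \<and> j \<in> {1..n} \<and> E i j}"
  have sym: "\<And>i j. E i j \<Longrightarrow> E j i" and irrefl: "\<And>i. \<not> E i i"
    using assms by (auto simp: simple_graph_def)
  have finT: "finite ?T"
    by (rule finite_subset[of _ "Pow {1..n}"]) auto
  have fibre: "card {x \<in> ?D. (\<lambda>(i, j). {i, j}) x = e} = 2" if "e \<in> ?T" for e
  proof -
    obtain a b where e: "e = {a, b}" "a \<in> {1..n}" "b \<in> {1..n}" "E a b"
      using \<open>e \<in> ?T\<close> by blast
    have "a \<noteq> b" using e(4) irrefl by blast
    have "{x \<in> ?D. (\<lambda>(i, j). {i, j}) x = e} = {(a, b), (b, a)}"
      using e sym by (auto simp: doubleton_eq_iff)
    then show ?thesis using \<open>a \<noteq> b\<close> by simp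
  qed
  (* ?D are the ordered edges; grouping them by the edge they span gives the factor 2. *)
  have "(\<Sum>i\<in>{1..n}. \<Sum>j\<in>{1..n}. adj E i j) = (\<Sum>x\<in>?V. if x \<in> ?D then 1 else 0)"
    unfolding sum.cartesian_product by (intro sum.cong) (auto simp: adj_def split: if_splits)
  also have "\<dots> = real (card ?D)"
  proof -
    have "?V \<inter> ?D = ?D" by blast
    then show ?thesis by (simp add: sum.If_cases)
  qed
  also have "card ?D = (\<Sum>e\<in>?T. card {x \<in> ?D. (\<lambda>(i, j). {i, j}) x = e})"
  proof -
    have finD: "finite ?D" by (rule finite_subset[of _ ?V]) auto
    have "(\<Sum>e\<in>?T. \<Sum>x\<in>{x \<in> ?D. (\<lambda>(i, j). {i, j}) x = e}. 1::nat) = (\<Sum>x\<in>?D. 1)"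
      by (rule sum.group[OF finD finT]) auto
    then show ?thesis by simp
  qed
  also have "\<dots> = 2 * num_edges n E"
    using fibre by (simp add: num_edges_def)
  finally show ?thesis by simp
qed

text \<open>Consequently the degrees sum to 2m, and the null-model term cancels the adjacency term.\<close>
lemma modularity_matrix_sum:
  assumes "simple_graph n E" and "num_edges n E \<ge> 1"
  shows "(\<Sum>i\<in>{1..n}. \<Sum>j\<in>{1..n}. modularity_matrix n E i j) = 0"
proof -
  define m2 where "m2 = 2 * real (num_edges n E)"
  have "m2 > 0" using assms(2) by (simp add: m2_def)
  have degrees: "(\<Sum>i\<in>{1..n}. degree n E i) = m2"
    using adjacency_sum[OF assms(1)] by (simp add: degree_def m2_def)
  have "(\<Sum>i\<in>{1..n}. \<Sum>j\<in>{1..n}. degree n E i * degree n E j / m2)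
        = (\<Sum>i\<in>{1..n}. degree n E i) * (\<Sum>j\<in>{1..n}. degree n E j) / m2"
    by (simp add: sum_product sum_divide_distrib)
  also have "\<dots> = m2" using degrees \<open>m2 > 0\<close> by simp
  finally show ?thesis
    using adjacency_sum[OF assms(1)]
    by (simp add: modularity_matrix_def sum_subtractf m2_def)
qed

text \<open>Colourings of L with colours K in which two distinct points a, b agree correspond to
  colourings of L - {a}: forget the colour of a, resp. copy the colour of b to a.\<close>
lemma card_colourings_agreeing:
  assumes "finite L" "a \<in> L" "b \<in> L" "a \<noteq> b"
  shows "card {f \<in> L \<rightarrow>\<^sub>E K. f a = f b} = card K ^ (card L - 1)"
proof -
  have "bij_betw (\<lambda>f. restrict f (L - {a})) {f \<in> L \<rightarrow>\<^sub>E K. f a = f b} ((L - {a}) \<rightarrow>\<^sub>E K)"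
  proof (rule bij_betw_byWitness[where f' = "\<lambda>g. g(a := g b)"])
    show "\<forall>f\<in>{f \<in> L \<rightarrow>\<^sub>E K. f a = f b}. (restrict f (L - {a}))(a := restrict f (L - {a}) b) = f"
      using assms(4) by (auto simp: fun_eq_iff PiE_def extensional_def)
    show "\<forall>g\<in>(L - {a}) \<rightarrow>\<^sub>E K. restrict (g(a := g b)) (L - {a}) = g"
      by (auto simp: fun_eq_iff PiE_def extensional_def)
    show "(\<lambda>f. restrict f (L - {a})) ` {f \<in> L \<rightarrow>\<^sub>E K. f a = f b} \<subseteq> (L - {a}) \<rightarrow>\<^sub>E K"
      by (rule image_subsetI) (simp add: Pi_iff PiE_iff)
    show "(\<lambda>g. g(a := g b)) ` ((L - {a}) \<rightarrow>\<^sub>E K) \<subseteq> {f \<in> L \<rightarrow>\<^sub>E K. f a = f b}"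
      using assms(2-4) by (auto simp: PiE_def extensional_def)
  qed
  then have "card {f \<in> L \<rightarrow>\<^sub>E K. f a = f b} = card ((L - {a}) \<rightarrow>\<^sub>E K)"
    by (rule bij_betw_same_card)
  also have "\<dots> = card K ^ (card L - 1)"
    using assms(1,2) by (simp add: card_funcsetE)
  finally show ?thesis .
qed

lemma colouring_agreements:
  assumes "finite L" "finite K" "a \<in> L" "b \<in> L"
  shows "(\<Sum>f\<in>L \<rightarrow>\<^sub>E K. if f a = f b then 1 else 0 :: real)
       = real (card K) ^ (card L - 1)
         + (real (card K) ^ card L - real (card K) ^ (card L - 1)) * (if a = b then 1 else 0)"
proof (cases "a = b")
  case True
  then show ?thesis using assms(1) by (simp add: card_funcsetE)
next
  case False
  have "(\<Sum>f\<in>L \<rightarrow>\<^sub>E K. if f a = f b then 1 else 0 :: real) = card {f \<in> L \<rightarrow>\<^sub>E K. f a = f b}"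
    using assms(1,2) by (simp add: sum.inter_filter[symmetric] finite_PiE)
  also have "\<dots> = real (card K) ^ (card L - 1)"
    using card_colourings_agreeing[OF assms(1,3,4) False] by simp
  finally show ?thesis using False by simp
qed

lemma exists_ge_mean:
  fixes \<phi> :: "'a \<Rightarrow> real"
  assumes "finite F" "F \<noteq> {}" "real (card F) * c \<le> (\<Sum>x\<in>F. \<phi> x)"
  shows "\<exists>x\<in>F. c \<le> \<phi> x"
proof (rule ccontr)
  assume "\<not> ?thesis"
  then have "(\<Sum>x\<in>F. \<phi> x) < (\<Sum>x\<in>F. c)"
    using assms(1,2) by (intro sum_strict_mono) auto
  then show False using assms(3) by simp
qed

text \<open>Summed over all k-colourings of the p labels, the merged labellings have total modularity
  (k^p - k^(p-1)) times the original one: a pair in one community is merged by all k^p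
  colourings and any other pair by k^(p-1) of them, and the part k^(p-1) common to all pairs
  is killed by the zero sum of B.\<close>
lemma colouring_sum:
  fixes h :: "nat \<Rightarrow> 'a"
  assumes "simple_graph n E" "num_edges n E \<ge> 1"
  defines "L \<equiv> h ` {1..n}"
  shows "(\<Sum>f\<in>L \<rightarrow>\<^sub>E {..<k}. label_modularity n E (f \<circ> h))
       = (real k ^ card L - real k ^ (card L - 1)) * label_modularity n E h"
proof -
  let ?F = "L \<rightarrow>\<^sub>E {..<k}"
  let ?B = "modularity_matrix n E"
  let ?c = "1 / (2 * real (num_edges n E))"
  let ?same = "\<lambda>x y. if x = y then 1 else 0 :: real"
  define a where "a = real k ^ (card L - 1)"
  define b where "b = real k ^ card L - a"
  have agree: "(\<Sum>f\<in>?F. ?same (f (h i)) (f (h j))) = a + b * ?same (h i) (h j)"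
    if "i \<in> {1..n}" "j \<in> {1..n}" for i j
    using colouring_agreements[of L "{..<k}" "h i" "h j"] that by (simp add: L_def a_def b_def)
  have "(\<Sum>f\<in>?F. label_modularity n E (f \<circ> h))
      = ?c * (\<Sum>f\<in>?F. \<Sum>i\<in>{1..n}. \<Sum>j\<in>{1..n}. ?B i j * ?same (f (h i)) (f (h j)))"
    by (simp add: label_modularity_def sum_distrib_left)
  also have "\<dots> = ?c * (\<Sum>i\<in>{1..n}. \<Sum>j\<in>{1..n}. ?B i j * (\<Sum>f\<in>?F. ?same (f (h i)) (f (h j))))"
    by (subst sum.swap, subst sum.swap) (simp add: sum_distrib_left)
  also have "\<dots> = ?c * (\<Sum>i\<in>{1..n}. \<Sum>j\<in>{1..n}. a * ?B i j + b * (?B i j * ?same (h i) (h j)))"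
    by (intro arg_cong[where f = "(*) ?c"] sum.cong refl) (simp add: agree algebra_simps)
  also have "\<dots> = a * ?c * (\<Sum>i\<in>{1..n}. \<Sum>j\<in>{1..n}. ?B i j) + b * label_modularity n E h"
    by (simp add: label_modularity_def sum.distrib sum_distrib_left sum_divide_distrib algebra_simps)
  finally show ?thesis
    using modularity_matrix_sum[OF assms(1,2)] by (simp add: b_def a_def)
qed

lemma good_colouring:
  fixes h :: "nat \<Rightarrow> 'a"
  assumes "simple_graph n E" "num_edges n E \<ge> 1" "k \<ge> 1" "n \<ge> 1"
  obtains f where "f \<in> h ` {1..n} \<rightarrow>\<^sub>E {..<k}"
    and "label_modularity n E (f \<circ> h) \<ge> (1 - 1 / real k) * label_modularity n E h"
proof -
  define L where "L = h ` {1..n}"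
  define p where "p = card L"
  have "finite L" and "L \<noteq> {}" using assms(4) by (auto simp: L_def)
  then have "p \<ge> 1" by (simp add: p_def Suc_le_eq card_gt_0_iff)
  have card: "card (L \<rightarrow>\<^sub>E {..<k}) = k ^ p"
    using \<open>finite L\<close> by (simp add: card_funcsetE p_def)
  have "real k ^ p = real k * real k ^ (p - 1)"
    using \<open>p \<ge> 1\<close> by (simp add: power_eq_if)
  then have weight: "real k ^ p - real k ^ (p - 1) = real k ^ p * (1 - 1 / real k)"
    using assms(3) by (simp add: field_simps)
  have "real (card (L \<rightarrow>\<^sub>E {..<k})) * ((1 - 1 / real k) * label_modularity n E h)
      = (\<Sum>f\<in>L \<rightarrow>\<^sub>E {..<k}. label_modularity n E (f \<circ> h))"
    using colouring_sum[OF assms(1,2), of h k] card weight by (simp add: L_def p_def)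
  moreover have "L \<rightarrow>\<^sub>E {..<k} \<noteq> {}"
    using card assms(3) by (metis card.empty power_not_zero not_one_le_zero)
  ultimately obtain f where "f \<in> L \<rightarrow>\<^sub>E {..<k}"
      "(1 - 1 / real k) * label_modularity n E h \<le> label_modularity n E (f \<circ> h)"
    using exists_ge_mean[of "L \<rightarrow>\<^sub>E {..<k}" "(1 - 1 / real k) * label_modularity n E h"
        "\<lambda>f. label_modularity n E (f \<circ> h)"] \<open>finite L\<close>
    by (auto simp: finite_PiE)
  then show ?thesis using that by (simp add: L_def)
qed

lemma finite_partitions: "finite {P. partition_on {1..n::nat} P \<and> card P = i}"
  by (rule finite_subset[OF _ finitely_many_partition_on[of "{1..n::nat}"]]) auto

text \<open>For 1 \<le> i \<le> n the vertex set has a partition into exactly i blocks, namely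
  {1}, ..., {i-1}, {i..n}.\<close>
lemma partition_of_size_exists:
  assumes "1 \<le> i" "i \<le> n"
  shows "level_partition n (\<lambda>j. min j i) \<in> {P. partition_on {1..n} P \<and> card P = i}"
proof -
  have "{1..i} \<subseteq> (\<lambda>j. min j i) ` {1..n}"
  proof
    fix x assume "x \<in> {1..i}"
    then have "x = min x i" "x \<in> {1..n}" using assms by auto
    then show "x \<in> (\<lambda>j. min j i) ` {1..n}" by blast
  qed
  then have "(\<lambda>j. min j i) ` {1..n} = {1..i}"
    using assms by auto
  then show ?thesis
    using level_partition_partition_on[of n] card_level_partition[of n "\<lambda>j. min j i"] by simp
qed

lemma modularity_le_Qk:
  assumes "partition_on {1..n} P"
  shows "modularity n E P \<le> Qk n E (card P)"
  unfolding Qk_def using assms by (intro Max_ge finite_imageI finite_partitions) auto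

lemma Qk_attained:
  assumes "1 \<le> i" "i \<le> n"
  obtains P where "partition_on {1..n} P" "Qk n E i = modularity n E P"
proof -
  let ?S = "{P. partition_on {1..n} P \<and> card P = i}"
  have "Qk n E i \<in> modularity n E ` ?S"
    unfolding Qk_def using partition_of_size_exists[OF assms]
    by (intro Max_in finite_imageI finite_partitions) blast
  then show ?thesis using that by blast
qed

lemma Q_opt_attained:
  assumes "1 \<le> n"
  obtains P where "partition_on {1..n} P" "Q_opt n E = modularity n E P"
proof -
  have "Q_opt n E \<in> Qk n E ` {1..n}"
    unfolding Q_opt_def Qk_plus_def using assms by (intro Max_in) auto
  then obtain i where "i \<in> {1..n}" "Q_opt n E = Qk n E i" by blast
  then show ?thesis using Qk_attained[of i n E] that by auto
qed

lemma modularity_le_Qk_plus: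
  assumes "partition_on {1..n} P" "1 \<le> card P" "card P \<le> k"
  shows "modularity n E P \<le> Qk_plus n E k"
proof -
  have "Qk n E (card P) \<le> Qk_plus n E k"
    unfolding Qk_plus_def using assms(2,3) by (intro Max_ge) auto
  with modularity_le_Qk[OF assms(1)] show ?thesis by (rule order_trans)
qed

theorem lemma1:
  fixes n k :: nat and E :: "nat \<Rightarrow> nat \<Rightarrow> bool"
  assumes "simple_graph n E"
    and "num_edges n E \<ge> 1"
    and "1 \<le> k" and "k \<le> n"
  shows "Qk_plus n E k \<ge> (1 - 1 / real k) * Q_opt n E"
proof -
  have "1 \<le> n" using assms(3,4) by simp
  obtain P where P: "partition_on {1..n} P" "Q_opt n E = modularity n E P"
    using Q_opt_attained[OF \<open>1 \<le> n\<close>] .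
  define h where "h = block_of P"
  have h: "\<And>i j. i \<in> {1..n} \<Longrightarrow> j \<in> {1..n} \<Longrightarrow> same_comm P i j \<longleftrightarrow> h i = h j"
    unfolding h_def by (rule same_comm_iff_block_eq[OF P(1)])
  obtain f where f: "f \<in> h ` {1..n} \<rightarrow>\<^sub>E {..<k}"
    and good: "label_modularity n E (f \<circ> h) \<ge> (1 - 1 / real k) * label_modularity n E h"
    using good_colouring[OF assms(1-3) \<open>1 \<le> n\<close>] .
  define M where "M = level_partition n (f \<circ> h)"
  have "card ((f \<circ> h) ` {1..n}) \<le> card {..<k}"
    using f by (intro card_mono) auto
  then have "1 \<le> card M" "card M \<le> k"
    using \<open>1 \<le> n\<close> by (auto simp: M_def card_level_partition Suc_le_eq card_gt_0_iff)
  have "(1 - 1 / real k) * Q_opt n E = (1 - 1 / real k) * label_modularity n E h"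
    using P(2) modularity_eq_label_modularity[OF h] by simp
  also have "\<dots> \<le> label_modularity n E (f \<circ> h)"
    by (rule good)
  also have "\<dots> = modularity n E M"
    unfolding M_def by (rule modularity_eq_label_modularity[symmetric]) (simp add: same_comm_level_partition)
  also have "\<dots> \<le> Qk_plus n E k"
    unfolding M_def by (rule modularity_le_Qk_plus[OF level_partition_partition_on])
      (use \<open>1 \<le> card M\<close> \<open>card M \<le> k\<close> in \<open>simp_all add: M_def\<close>)
  finally show ?thesis .
qed

end
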